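(* Let $a,b,c,d>0$ and let $C_3=\{x=(x_1,x_2,x_3)\in\mathbb R^3:\ x_3>\varphi(x_1,x_2)\}$, where $$\varphi(x_1,x_2)=\begin{cases} ax_1+bx_2, & x_1>0,\ x_2>0,\\ -cx_1+bx_2, & x_1<0,\ x_2>0,\\ -cx_1-dx_2, & x_1<0,\ x_2<0,\\ ax_1-dx_2, & x_1>0,\ x_2<0.\end{cases}$$ Then for every $z=(z_1,z_2,z_3)\in\mathbb C^3$ with $\operatorname{Im} z$ in the interior of the dual cone $C_3^*=\{y\in\mathbb R^3: x\cdot y\ge 0\ \forall x\in C_3\}$, the Bochner kernel $$B_3(z)=\int_{C_3} e^{i x\cdot z}\,dx,\qquad x\cdot z=x_1z_1+x_2z_2+x_3z_3,$$ is given by $$B_3(z)=-\frac{i(a+c)(b+d)\,z_3}{(z_1+az_3)(z_2+bz_3)(z_1-cz_3)(z_2-dz_3)}.$$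
   Context: $C_3$ is a convex cone in $\mathbb R^3$ (a four-faced cone) not containing a whole straight line; its Bochner kernel is the integral above, which converges absolutely when $\operatorname{Im}z$ lies in the interior of the dual cone. *)

theory Defs
  imports "HOL-Analysis.Analysis"
begin

definition phi :: "real \<Rightarrow> real \<Rightarrow> real \<Rightarrow> real \<Rightarrow> real \<Rightarrow> real \<Rightarrow> real" where
  "phi a b c d x1 x2 =
     (if x1 > 0 \<and> x2 > 0 then a * x1 + b * x2
      else if x1 < 0 \<and> x2 > 0 then - c * x1 + b * x2
      else if x1 < 0 \<and> x2 < 0 then - c * x1 - d * x2
      else a * x1 - d * x2)"

text \<open>The cone C_3: points with x3 > phi(x1,x2), where phi is defined (x1, x2 nonzero).\<close>
definition C3 :: "real \<Rightarrow> real \<Rightarrow> real \<Rightarrow> real \<Rightarrow> (real \<times> real \<times> real) set" where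
  "C3 a b c d = {(x1, x2, x3). x1 \<noteq> 0 \<and> x2 \<noteq> 0 \<and> x3 > phi a b c d x1 x2}"

definition dual_cone :: "(real \<times> real \<times> real) set \<Rightarrow> (real \<times> real \<times> real) set" where
  "dual_cone C = {y. \<forall>x\<in>C. x \<bullet> y \<ge> 0}"

definition Im3 :: "complex \<times> complex \<times> complex \<Rightarrow> real \<times> real \<times> real" where
  "Im3 z = (Im (fst z), Im (fst (snd z)), Im (snd (snd z)))"

definition cdot3 :: "real \<times> real \<times> real \<Rightarrow> complex \<times> complex \<times> complex \<Rightarrow> complex" where
  "cdot3 x z = of_real (fst x) * fst z + of_real (fst (snd x)) * fst (snd z)
              + of_real (snd (snd x)) * snd (snd z)"

definition bochner_kernel :: "(real \<times> real \<times> real) set \<Rightarrow> complex \<times> complex \<times> complex \<Rightarrow> complex" where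
  "bochner_kernel C z = (\<integral>x\<in>C. exp (\<i> * cdot3 x z) \<partial>lborel)"

end

theory Submission
  imports Defs
begin

(* Integrating out x3 over the half-line x3 > phi(x1, x2) gives (i / z3) exp (i phi(x1, x2) z3).
   As phi is a sum of a piecewise linear function of x1 and one of x2, what remains is a product
   of two one-dimensional integrals, each the sum of two half-line integrals, e.g.
   i / (z1 + a z3) - i / (z1 - c z3); Im z in the interior of the dual cone is exactly the sign
   condition making them converge. Absolute integrability, which Fubini needs, comes from the same
   computation at i Im z in place of z, where the integrand becomes its own modulus. *)

lemma has_bochner_integral_lborel_pair:
  fixes f :: "'a::euclidean_space \<times> 'b::euclidean_space \<Rightarrow> 'c::{banach,second_countable_topology}"
  assumes f: "f \<in> borel_measurable lborel"
    and sections: "\<And>x. has_bochner_integral lborel (\<lambda>y. f (x, y)) (g x)"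
    and g: "has_bochner_integral lborel g I"
    and norm: "integrable lborel (\<lambda>x. \<integral>y. norm (f (x, y)) \<partial>lborel)"
  shows "has_bochner_integral lborel f I"
proof -
  have integrable: "integrable (lborel \<Otimes>\<^sub>M lborel) f"
    using f sections norm
    by (intro lborel_pair.Fubini_integrable) (auto simp: lborel_prod has_bochner_integral_iff)
  have "g = (\<lambda>x. \<integral>y. f (x, y) \<partial>lborel)"
    using has_bochner_integral_integral_eq[OF sections] by simp
  then have "integral\<^sup>L lborel f = integral\<^sup>L lborel g"
    using lborel_pair.integral_fst'[OF integrable] by (simp add: lborel_prod)
  with integrable g show ?thesis
    by (simp add: has_bochner_integral_iff lborel_prod)
qed

lemma has_bochner_integral_lborel3:
  fixes f :: "real \<times> real \<times> real \<Rightarrow> 'a::{banach,second_countable_topology}"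
  assumes f [measurable]: "f \<in> borel_measurable lborel"
    and sections3: "\<And>x1 x2. has_bochner_integral lborel (\<lambda>x3. f (x1, x2, x3)) (g x1 x2)"
    and sections2: "\<And>x1. has_bochner_integral lborel (g x1) (h x1)"
    and h: "has_bochner_integral lborel h I"
    and norm3: "\<And>x1. integrable lborel (\<lambda>x2. \<integral>x3. norm (f (x1, x2, x3)) \<partial>lborel)"
    and norm2: "integrable lborel (\<lambda>x1. \<integral>x2. \<integral>x3. norm (f (x1, x2, x3)) \<partial>lborel \<partial>lborel)"
  shows "has_bochner_integral lborel f I"
proof -
  have inner: "has_bochner_integral lborel (\<lambda>q. f (x1, q)) (h x1)"
    and inner_norm: "(\<integral>q. norm (f (x1, q)) \<partial>lborel) = (\<integral>x2. \<integral>x3. norm (f (x1, x2, x3)) \<partial>lborel \<partial>lborel)"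
    for x1
  proof -
    have f_x1: "(\<lambda>q. f (x1, q)) \<in> borel_measurable lborel"
      using f by (simp add: lborel_prod[symmetric])
    show "has_bochner_integral lborel (\<lambda>q. f (x1, q)) (h x1)"
      by (rule has_bochner_integral_lborel_pair[OF f_x1 sections3 sections2]) (simp add: norm3)
    have "has_bochner_integral lborel (\<lambda>q. norm (f (x1, q)))
            (\<integral>x2. \<integral>x3. norm (f (x1, x2, x3)) \<partial>lborel \<partial>lborel)"
    proof (rule has_bochner_integral_lborel_pair)
      show "(\<lambda>q. norm (f (x1, q))) \<in> borel_measurable lborel"
        using f_x1 by measurable
      show "has_bochner_integral lborel (\<lambda>x3. norm (f (x1, x2, x3))) (\<integral>x3. norm (f (x1, x2, x3)) \<partial>lborel)"
        for x2
        using sections3 by (auto simp: has_bochner_integral_iff)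
    qed (use norm3 in \<open>simp_all add: has_bochner_integral_iff\<close>)
    then show "(\<integral>q. norm (f (x1, q)) \<partial>lborel) = (\<integral>x2. \<integral>x3. norm (f (x1, x2, x3)) \<partial>lborel \<partial>lborel)"
      by (rule has_bochner_integral_integral_eq)
  qed
  show ?thesis
    by (rule has_bochner_integral_lborel_pair[OF f inner h]) (simp add: inner_norm norm2)
qed

lemma set_integrable_exp_Ioi:
  fixes \<eta> p :: real
  assumes "\<eta> > 0"
  shows "set_integrable lborel {p<..} (\<lambda>t. exp (- (\<eta> * t)))"
proof -
  have "(\<lambda>t. exp (- \<eta> * t)) absolutely_integrable_on {p..}"
    using integrable_on_exp_minus_to_infinity[OF assms, of p]
    by (subst absolutely_integrable_on_iff_nonneg) auto
  then have "set_integrable lborel {p..} (\<lambda>t. exp (- (\<eta> * t)))"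
    by (simp add: absolutely_integrable_on_def set_integrable_def integrable_completion)
  then show ?thesis
    by (rule set_integrable_subset) auto
qed

lemma norm_exp_i_mult:
  fixes t :: real and w :: complex
  shows "norm (exp (\<i> * t * w)) = exp (- (Im w * t))"
  by (simp add: norm_exp_eq_Re)

lemma tendsto_exp_i_mult_at_top:
  assumes "Im w > 0"
  shows "((\<lambda>t::real. exp (\<i> * t * w)) \<longlongrightarrow> 0) at_top"
proof (rule tendsto_norm_zero_cancel)
  show "((\<lambda>t::real. norm (exp (\<i> * t * w))) \<longlongrightarrow> 0) at_top"
    unfolding norm_exp_i_mult using assms by real_asymp
qed

lemma has_bochner_integral_exp_Ioi:
  fixes p :: real and w :: complex
  assumes "Im w > 0"
  shows "has_bochner_integral lborel (\<lambda>t. indicator {p<..} t *\<^sub>R exp (\<i> * t * w))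
           (\<i> * exp (\<i> * p * w) / w)"
proof -
  have "w \<noteq> 0" using assms by auto
  have integrable: "set_integrable lborel {p<..} (\<lambda>t::real. exp (\<i> * t * w))"
  proof (rule set_integrable_bound[OF set_integrable_exp_Ioi[OF assms]])
    show "set_borel_measurable lborel {p<..} (\<lambda>t::real. exp (\<i> * t * w))"
      unfolding set_borel_measurable_def by measurable
  qed (simp add: norm_exp_i_mult)
  have "(LBINT t=ereal p..\<infinity>. exp (\<i> * t * w)) = 0 - exp (\<i> * p * w) / (\<i> * w)"
  proof (rule interval_integral_FTC_integrable[where F = "\<lambda>t. exp (\<i> * t * w) / (\<i> * w)"])
    show "((\<lambda>t::real. exp (\<i> * t * w) / (\<i> * w)) has_vector_derivative exp (\<i> * t * w)) (at t)"
      for t :: real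
    proof -
      have "((\<lambda>u. exp (\<i> * u * w) / (\<i> * w)) has_field_derivative exp (\<i> * t * w)) (at t)"
        using \<open>w \<noteq> 0\<close> by (auto intro!: derivative_eq_intros)
      then show ?thesis
        by (rule has_vector_derivative_real_field)
    qed
    show "isCont (\<lambda>t::real. exp (\<i> * t * w)) t" for t :: real
      by (intro continuous_intros)
    show "(((\<lambda>t::real. exp (\<i> * t * w) / (\<i> * w)) \<circ> real_of_ereal) \<longlongrightarrow> exp (\<i> * p * w) / (\<i> * w))
            (at_right (ereal p))"
      using \<open>w \<noteq> 0\<close> unfolding ereal_tendsto_simps by (intro tendsto_intros) auto
    show "(((\<lambda>t::real. exp (\<i> * t * w) / (\<i> * w)) \<circ> real_of_ereal) \<longlongrightarrow> 0) (at_left \<infinity>)"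
      unfolding ereal_tendsto_simps by (intro tendsto_divide_zero tendsto_exp_i_mult_at_top assms)
  qed (use integrable in simp_all)
  also have "0 - exp (\<i> * p * w) / (\<i> * w) = \<i> * exp (\<i> * p * w) / w"
    using \<open>w \<noteq> 0\<close> by (simp add: field_simps)
  finally show ?thesis
    using integrable
    by (simp add: has_bochner_integral_iff interval_integral_Ioi set_lebesgue_integral_def
        set_integrable_def)
qed

lemma has_bochner_integral_exp_Iio:
  fixes p :: real and w :: complex
  assumes "Im w < 0"
  shows "has_bochner_integral lborel (\<lambda>t. indicator {..<p} t *\<^sub>R exp (\<i> * t * w))
           (- \<i> * exp (\<i> * p * w) / w)"
proof -
  let ?f = "\<lambda>t::real. indicator {-p<..} t *\<^sub>R exp (\<i> * t * (- w))"
  have f: "has_bochner_integral lborel ?f (\<i> * exp (\<i> * (- p) * (- w)) / (- w))"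
    using has_bochner_integral_exp_Ioi[of "- w" "- p"] assms by simp
  have reflect: "(\<lambda>t. ?f (0 + (-1) * t)) = (\<lambda>t. indicator {..<p} t *\<^sub>R exp (\<i> * t * w))"
    by (auto simp: indicator_def)
  show ?thesis
    using f lborel_integrable_real_affine_iff[of "-1" ?f 0] lborel_integral_real_affine[of "-1" ?f 0]
    unfolding has_bochner_integral_iff reflect by simp
qed

(* Off t = 0 this is exp (i (t w + psi t v)) with psi t = a t for t > 0 and psi t = -c t for t < 0;
   phi a b c d x1 x2 = psi_ac x1 + psi_bd x2 off the axes. *)
definition kinked_exp :: "real \<Rightarrow> real \<Rightarrow> complex \<Rightarrow> complex \<Rightarrow> real \<Rightarrow> complex" where
  "kinked_exp a c w v t =
     indicator {0<..} t *\<^sub>R exp (\<i> * t * (w + a * v)) + indicator {..<0} t *\<^sub>R exp (\<i> * t * (w - c * v))"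

lemma has_bochner_integral_kinked_exp:
  fixes a c :: real and w v :: complex
  assumes "Im (w + a * v) > 0" "Im (w - c * v) < 0"
  shows "has_bochner_integral lborel (kinked_exp a c w v) (\<i> / (w + a * v) - \<i> / (w - c * v))"
  using has_bochner_integral_add[OF has_bochner_integral_exp_Ioi[OF assms(1), of 0]
      has_bochner_integral_exp_Iio[OF assms(2), of 0]]
  by (simp add: kinked_exp_def [abs_def])

definition kernel_integrand ::
    "(real \<times> real \<times> real) set \<Rightarrow> complex \<times> complex \<times> complex \<Rightarrow> real \<times> real \<times> real \<Rightarrow> complex" where
  "kernel_integrand C z x = indicator C x *\<^sub>R exp (\<i> * cdot3 x z)"

lemma borel_measurable_kernel_integrand:
  assumes "C \<in> sets lborel"
  shows "kernel_integrand C z \<in> borel_measurable lborel"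
proof -
  have "continuous_on UNIV (\<lambda>x. exp (\<i> * cdot3 x z))"
    unfolding cdot3_def by (intro continuous_intros)
  then have "(\<lambda>x. exp (\<i> * cdot3 x z)) \<in> borel_measurable lborel"
    by (simp add: borel_measurable_continuous_onI)
  then show ?thesis
    unfolding kernel_integrand_def [abs_def] using assms by measurable
qed

lemma norm_kernel_integrand:
  "norm (kernel_integrand C (z1, z2, z3) x) = Re (kernel_integrand C (\<i> * Im z1, \<i> * Im z2, \<i> * Im z3) x)"
  by (simp add: kernel_integrand_def cdot3_def norm_exp_eq_Re Re_exp Im_exp indicator_def algebra_simps)

lemma sets_C3: "C3 a b c d \<in> sets lborel"
proof -
  have "Measurable.pred (borel \<Otimes>\<^sub>M borel \<Otimes>\<^sub>M borel) (\<lambda>x. x \<in> C3 a b c d)"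
    unfolding C3_def phi_def case_prod_beta mem_Collect_eq by measurable
  then show ?thesis
    by (simp add: pred_def space_pair_measure borel_prod)
qed

lemma has_bochner_integral_C3_section:
  fixes a b c d x1 x2 :: real and z1 z2 z3 :: complex
  assumes "Im z3 > 0"
  shows "has_bochner_integral lborel (\<lambda>x3. kernel_integrand (C3 a b c d) (z1, z2, z3) (x1, x2, x3))
           (\<i> / z3 * kinked_exp a c z1 z3 x1 * kinked_exp b d z2 z3 x2)"
proof (cases "x1 = 0 \<or> x2 = 0")
  case True
  then show ?thesis
    by (auto simp: kernel_integrand_def C3_def kinked_exp_def)
next
  case False
  let ?p = "phi a b c d x1 x2" and ?e = "exp (\<i> * (x1 * z1 + x2 * z2))"
  have integrand: "(\<lambda>x3. kernel_integrand (C3 a b c d) (z1, z2, z3) (x1, x2, x3)) =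
      (\<lambda>x3. ?e * (indicator {?p<..} x3 *\<^sub>R exp (\<i> * x3 * z3)))"
    using False
    by (simp add: fun_eq_iff kernel_integrand_def C3_def cdot3_def indicator_def exp_add distrib_left
        mult.assoc)
  have factorized: "?e * (\<i> * exp (\<i> * ?p * z3) / z3) = \<i> / z3 * kinked_exp a c z1 z3 x1 * kinked_exp b d z2 z3 x2"
    using False
    by (cases "x1 > 0"; cases "x2 > 0")
       (simp_all add: phi_def kinked_exp_def mult_exp_exp algebra_simps)
  show ?thesis
    unfolding integrand factorized [symmetric]
    by (intro has_bochner_integral_mult_right has_bochner_integral_exp_Ioi assms)
qed

lemma has_bochner_integral_kernel_C3:
  fixes a b c d :: real and z1 z2 z3 :: complex
  assumes "Im z3 > 0" "Im (z1 + a * z3) > 0" "Im (z1 - c * z3) < 0"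
    "Im (z2 + b * z3) > 0" "Im (z2 - d * z3) < 0"
  shows "has_bochner_integral lborel (kernel_integrand (C3 a b c d) (z1, z2, z3))
           (\<i> / z3 * (\<i> / (z1 + a * z3) - \<i> / (z1 - c * z3)) * (\<i> / (z2 + b * z3) - \<i> / (z2 - d * z3)))"
proof -
  let ?J = "\<lambda>r s w v. \<i> / (w + r * v) - \<i> / (w - s * v)"
  have sections2: "has_bochner_integral lborel (\<lambda>x2. \<i> / u3 * kinked_exp a c u1 u3 x1 * kinked_exp b d u2 u3 x2)
         (\<i> / u3 * kinked_exp a c u1 u3 x1 * ?J b d u2 u3)"
    and sections1: "has_bochner_integral lborel (\<lambda>x1. \<i> / u3 * kinked_exp a c u1 u3 x1 * ?J b d u2 u3)
         (\<i> / u3 * ?J a c u1 u3 * ?J b d u2 u3)"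
    if "Im (u1 + a * u3) > 0" "Im (u1 - c * u3) < 0" "Im (u2 + b * u3) > 0" "Im (u2 - d * u3) < 0"
    for u1 u2 u3 :: complex and x1 :: real
    using has_bochner_integral_kinked_exp that
    by (auto intro!: has_bochner_integral_mult_left has_bochner_integral_mult_right)
  let ?w1 = "\<i> * Im z1" and ?w2 = "\<i> * Im z2" and ?w3 = "\<i> * Im z3"
  have w: "Im ?w3 > 0" "Im (?w1 + a * ?w3) > 0" "Im (?w1 - c * ?w3) < 0"
    "Im (?w2 + b * ?w3) > 0" "Im (?w2 - d * ?w3) < 0"
    using assms by simp_all
  have norm_sections3: "(\<integral>x3. norm (kernel_integrand (C3 a b c d) (z1, z2, z3) (x1, x2, x3)) \<partial>lborel) =
      Re (\<i> / ?w3 * kinked_exp a c ?w1 ?w3 x1 * kinked_exp b d ?w2 ?w3 x2)" for x1 x2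
    unfolding norm_kernel_integrand
    by (intro has_bochner_integral_integral_eq has_bochner_integral_Re has_bochner_integral_C3_section w)
  have norm_sections2: "(\<integral>x2. \<integral>x3. norm (kernel_integrand (C3 a b c d) (z1, z2, z3) (x1, x2, x3)) \<partial>lborel \<partial>lborel) =
      Re (\<i> / ?w3 * kinked_exp a c ?w1 ?w3 x1 * ?J b d ?w2 ?w3)" for x1
    unfolding norm_sections3
    by (intro has_bochner_integral_integral_eq has_bochner_integral_Re sections2[OF w(2-5)])
  show ?thesis
  proof (rule has_bochner_integral_lborel3)
    show "kernel_integrand (C3 a b c d) (z1, z2, z3) \<in> borel_measurable lborel"
      by (intro borel_measurable_kernel_integrand sets_C3)
    show "integrable lborel (\<lambda>x2. \<integral>x3. norm (kernel_integrand (C3 a b c d) (z1, z2, z3) (x1, x2, x3)) \<partial>lborel)"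
      for x1
      unfolding norm_sections3
      by (intro integrable_Re integrable.intros[OF sections2[OF w(2-5)]])
    show "integrable lborel
        (\<lambda>x1. \<integral>x2. \<integral>x3. norm (kernel_integrand (C3 a b c d) (z1, z2, z3) (x1, x2, x3)) \<partial>lborel \<partial>lborel)"
      unfolding norm_sections2
      by (intro integrable_Re integrable.intros[OF sections1[OF w(2-5)]])
  qed (use has_bochner_integral_C3_section assms sections2 sections1 in blast)+
qed

lemma kernel_C3_closed_form:
  fixes a b c d :: real and z1 z2 z3 :: complex
  assumes "z3 \<noteq> 0" "z1 + a * z3 \<noteq> 0" "z1 - c * z3 \<noteq> 0" "z2 + b * z3 \<noteq> 0" "z2 - d * z3 \<noteq> 0"
  shows "\<i> / z3 * (\<i> / (z1 + a * z3) - \<i> / (z1 - c * z3)) * (\<i> / (z2 + b * z3) - \<i> / (z2 - d * z3)) =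
      - (\<i> * of_real ((a + c) * (b + d)) * z3) /
        ((z1 + a * z3) * (z2 + b * z3) * (z1 - c * z3) * (z2 - d * z3))"
proof -
  have partial_fractions:
    "\<i> / (w + r * z3) - \<i> / (w - s * z3) = - \<i> * (r + s) * z3 / ((w + r * z3) * (w - s * z3))"
    if "w + r * z3 \<noteq> 0" "w - s * z3 \<noteq> 0" for w :: complex and r s :: real
    using that by (simp add: divide_simps) (simp add: algebra_simps)
  show ?thesis
    using assms by (simp add: partial_fractions divide_simps) (simp add: algebra_simps)
qed

lemma nonneg_if_perturbations_nonneg:
  fixes A B :: real
  assumes "\<And>e. e > 0 \<Longrightarrow> 0 \<le> A + e * B"
  shows "0 \<le> A"
proof -
  have "((\<lambda>e. A + e * B) \<longlongrightarrow> A + 0 * B) (at_right 0)"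
    by (intro tendsto_intros)
  moreover have "\<forall>\<^sub>F e in at_right 0. 0 \<le> A + e * B"
    using eventually_at_right_less[of "0::real"] by (rule eventually_mono) (rule assms)
  ultimately show ?thesis
    by (auto dest: tendsto_lowerbound)
qed

lemma dual_cone_C3_nonneg:
  fixes a b c d :: real
  assumes y: "(y1, y2, y3) \<in> dual_cone (C3 a b c d)"
  shows "0 \<le> y1 + a * y3" "0 \<le> c * y3 - y1" "0 \<le> y2 + b * y3" "0 \<le> d * y3 - y2"
proof -
  have pairing: "0 \<le> x1 * y1 + x2 * y2 + x3 * y3" if "(x1, x2, x3) \<in> C3 a b c d" for x1 x2 x3
    using y that unfolding dual_cone_def by (auto simp: inner_prod_def)
  show "0 \<le> y1 + a * y3"
  proof (rule nonneg_if_perturbations_nonneg[where B = "y2 + b * y3 + y3"])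
    fix e :: real assume "e > 0"
    then have "(1, e, a + b * e + e) \<in> C3 a b c d" by (simp add: C3_def phi_def)
    from pairing[OF this] show "0 \<le> y1 + a * y3 + e * (y2 + b * y3 + y3)" by (simp add: algebra_simps)
  qed
  show "0 \<le> c * y3 - y1"
  proof (rule nonneg_if_perturbations_nonneg[where B = "y2 + b * y3 + y3"])
    fix e :: real assume "e > 0"
    then have "(-1, e, c + b * e + e) \<in> C3 a b c d" by (simp add: C3_def phi_def)
    from pairing[OF this] show "0 \<le> c * y3 - y1 + e * (y2 + b * y3 + y3)" by (simp add: algebra_simps)
  qed
  show "0 \<le> y2 + b * y3"
  proof (rule nonneg_if_perturbations_nonneg[where B = "y1 + a * y3 + y3"])
    fix e :: real assume "e > 0"
    then have "(e, 1, a * e + b + e) \<in> C3 a b c d" by (simp add: C3_def phi_def)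
    from pairing[OF this] show "0 \<le> y2 + b * y3 + e * (y1 + a * y3 + y3)" by (simp add: algebra_simps)
  qed
  show "0 \<le> d * y3 - y2"
  proof (rule nonneg_if_perturbations_nonneg[where B = "y1 + a * y3 + y3"])
    fix e :: real assume "e > 0"
    then have "(e, -1, a * e + d + e) \<in> C3 a b c d" by (simp add: C3_def phi_def)
    from pairing[OF this] show "0 \<le> d * y3 - y2 + e * (y1 + a * y3 + y3)" by (simp add: algebra_simps)
  qed
qed

lemma interior_dual_cone_C3_pos:
  fixes a b c d :: real
  assumes "(y1, y2, y3) \<in> interior (dual_cone (C3 a b c d))"
  shows "0 < y1 + a * y3" "0 < c * y3 - y1" "0 < y2 + b * y3" "0 < d * y3 - y2"
proof -
  obtain e where "e > 0" and ball: "ball (y1, y2, y3) e \<subseteq> dual_cone (C3 a b c d)"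
    using assms by (meson mem_interior)
  have "(y1 + t, y2, y3) \<in> dual_cone (C3 a b c d)" "(y1, y2 + t, y3) \<in> dual_cone (C3 a b c d)"
    if "\<bar>t\<bar> < e" for t
    using ball that by (auto simp: dist_Pair_Pair dist_real_def subset_iff)
  note shifted = this[of "e / 2"] this[of "- e / 2"]
  show "0 < y1 + a * y3" "0 < c * y3 - y1" "0 < y2 + b * y3" "0 < d * y3 - y2"
    using dual_cone_C3_nonneg[OF shifted(3)] dual_cone_C3_nonneg[OF shifted(1)]
      dual_cone_C3_nonneg[OF shifted(4)] dual_cone_C3_nonneg[OF shifted(2)] \<open>e > 0\<close>
    by simp_all
qed

theorem lemma1:
  fixes a b c d :: real and z1 z2 z3 :: complex
  assumes "a > 0" "b > 0" "c > 0" "d > 0"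
    and "Im3 (z1, z2, z3) \<in> interior (dual_cone (C3 a b c d))"
  shows "set_integrable lborel (C3 a b c d) (\<lambda>x. exp (\<i> * cdot3 x (z1, z2, z3)))
    \<and> bochner_kernel (C3 a b c d) (z1, z2, z3) =
      - (\<i> * of_real ((a + c) * (b + d)) * z3) /
        ((z1 + of_real a * z3) * (z2 + of_real b * z3) * (z1 - of_real c * z3) * (z2 - of_real d * z3))"
proof -
  have "(Im z1, Im z2, Im z3) \<in> interior (dual_cone (C3 a b c d))"
    using assms(5) by (simp add: Im3_def)
  note cone = interior_dual_cone_C3_pos[OF this]
  have "0 < (a + c) * Im z3"
    using cone(1,2) by (simp add: algebra_simps)
  then have "Im z3 > 0"
    using assms(1,3) by (simp add: zero_less_mult_iff)
  then have integral: "has_bochner_integral lborel (kernel_integrand (C3 a b c d) (z1, z2, z3))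
      (\<i> / z3 * (\<i> / (z1 + a * z3) - \<i> / (z1 - c * z3)) * (\<i> / (z2 + b * z3) - \<i> / (z2 - d * z3)))"
    using cone by (intro has_bochner_integral_kernel_C3) simp_all
  have nonzero: "z3 \<noteq> 0" "z1 + a * z3 \<noteq> 0" "z1 - c * z3 \<noteq> 0" "z2 + b * z3 \<noteq> 0" "z2 - d * z3 \<noteq> 0"
    using \<open>Im z3 > 0\<close> cone by (auto dest!: arg_cong[where f = Im])
  show ?thesis
    using integral unfolding kernel_C3_closed_form[OF nonzero]
    by (simp add: has_bochner_integral_iff bochner_kernel_def set_integrable_def
        set_lebesgue_integral_def kernel_integrand_def [abs_def])
qed

end
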